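(* Let $a\neq b$ be decimal digits, let $K\ge 1$ be an integer, and let $N=K\cdot 10^6+\overline{aaaaab}$, i.e. $N$ is the integer whose decimal representation is that of $K$ followed by the six digits $a,a,a,a,a,b$. If $N$ is an absolute prime, then $7\mid K$.
   Context: For a positive integer $N$ with decimal representation $d_1d_2\dots d_n$ (digits $d_k\in\{0,\dots,9\}$, $d_1\neq 0$), a permutation of the digits of $N$ is any integer $\sum_{k=1}^{n} d_{\sigma(k)}10^{n-k}$ with $\sigma$ a permutation of $\{1,\dots,n\}$. $N$ is called an absolute prime if every integer obtained by a permutation of the digits of $N$ (including $N$ itself) is prime. The notation $\overline{c_1c_2\dots c_m}$ denotes $\sum_{k=1}^m c_k10^{m-k}$. *)

theory Defs
  imports "HOL-Computational_Algebra.Primes" "HOL-Combinatorics.Permutations"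
begin

fun digits10 :: "nat \<Rightarrow> nat list" where
  "digits10 n = (if n < 10 then [n] else digits10 (n div 10) @ [n mod 10])"

text \<open>N is an absolute prime if every number obtained by permuting its
  decimal digits (sum over k of d_(sigma k) * 10^(n-k), 1-indexed; here 0-indexed)
  is prime.\<close>
definition absolute_prime :: "nat \<Rightarrow> bool" where
  "absolute_prime N \<longleftrightarrow> N > 0 \<and>
     (let ds = digits10 N; n = length ds in
      \<forall>\<sigma>. \<sigma> permutes {..<n} \<longrightarrow>
            prime (\<Sum>k<n. ds ! (\<sigma> k) * 10 ^ (n - 1 - k)))"

end

theory Submission
  imports Defs
begin

text \<open>Exchanging the final digit b of N with one of the five digits a before it (or with
  itself) yields the six numbers obtained from K followed by aaaaaa by putting b in the position of
  weight 10^j, j < 6. Because 10^6 = 1 and 111111 = 0 modulo 7, such a number is congruent to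
  K + (b - a) 10^j modulo 7. If 7 does not divide b - a, then, 10 being a primitive root modulo 7,
  the six values (b - a) 10^j run through all nonzero residues, so one of the numbers is divisible
  by 7 unless 7 divides K. If 7 divides b - a, then a and b have opposite parity, and the number
  ending in the even one of them is even.\<close>

definition from_digits10 :: "nat list \<Rightarrow> nat" where
  "from_digits10 ds = foldl (\<lambda>n d. 10 * n + d) 0 ds"

declare digits10.simps [simp del] \<comment> \<open>it unfolds forever on symbolic arguments\<close>

lemma from_digits10_Nil [simp]: "from_digits10 [] = 0"
  by (simp add: from_digits10_def)

lemma from_digits10_snoc [simp]: "from_digits10 (ds @ [d]) = 10 * from_digits10 ds + d"
  by (simp add: from_digits10_def)

lemma from_digits10_append:
  "from_digits10 (xs @ ys) = from_digits10 xs * 10 ^ length ys + from_digits10 ys"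
  by (induction ys rule: rev_induct) (simp_all flip: append_assoc add: algebra_simps)

lemma from_digits10_Cons: "from_digits10 (d # ds) = d * 10 ^ length ds + from_digits10 ds"
  using from_digits10_append[of "[d]" ds] by (simp add: from_digits10_def)

lemma from_digits10_digits10 [simp]: "from_digits10 (digits10 n) = n"
  by (induction n rule: digits10.induct) (subst digits10.simps, simp add: from_digits10_def)

lemma digits10_snoc: "m \<ge> 1 \<Longrightarrow> d < 10 \<Longrightarrow> digits10 (10 * m + d) = digits10 m @ [d]"
  by (subst digits10.simps) simp

lemma digits10_append:
  assumes "n \<ge> 1" and "\<forall>d \<in> set ds. d < 10"
  shows "digits10 (n * 10 ^ length ds + from_digits10 ds) = digits10 n @ ds"
  using assms(2)
proof (induction ds rule: rev_induct)
  case Nil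
  then show ?case by simp
next
  case (snoc d ds)
  let ?m = "n * 10 ^ length ds + from_digits10 ds"
  have "n * 10 ^ length (ds @ [d]) + from_digits10 (ds @ [d]) = 10 * ?m + d"
    by (simp add: algebra_simps)
  then have "digits10 (n * 10 ^ length (ds @ [d]) + from_digits10 (ds @ [d]))
      = digits10 (10 * ?m + d)"
    by (rule arg_cong)
  also have "\<dots> = digits10 ?m @ [d]"
    using assms(1) snoc.prems by (intro digits10_snoc) (simp_all add: add_increasing2)
  also have "\<dots> = digits10 n @ ds @ [d]"
    using snoc by simp
  finally show ?case by simp
qed

lemma sum_nth_power10_eq_from_digits10:
  "(\<Sum>k<length ds. ds ! k * 10 ^ (length ds - 1 - k)) = from_digits10 ds"
proof (induction ds rule: rev_induct)
  case Nil
  then show ?case by simp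
next
  case (snoc x xs)
  let ?l = "length xs"
  have "(\<Sum>k<?l. (xs @ [x]) ! k * 10 ^ (?l - k)) = (\<Sum>k<?l. 10 * (xs ! k * 10 ^ (?l - 1 - k)))"
  proof (rule sum.cong)
    fix k assume "k \<in> {..<?l}"
    then have "k < ?l" and "?l - k = Suc (?l - 1 - k)" by auto
    then show "(xs @ [x]) ! k * 10 ^ (?l - k) = 10 * (xs ! k * 10 ^ (?l - 1 - k))"
      by (simp add: nth_append)
  qed simp
  with snoc show ?case by (simp flip: sum_distrib_left)
qed

lemma absolute_prime_permute_list:
  assumes "absolute_prime N" and perm: "\<sigma> permutes {..<length (digits10 N)}"
  shows "prime (from_digits10 (permute_list \<sigma> (digits10 N)))"
proof -
  let ?ds = "digits10 N"
  have "(\<Sum>k<length ?ds. ?ds ! \<sigma> k * 10 ^ (length ?ds - 1 - k))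
      = (\<Sum>k<length ?ds. permute_list \<sigma> ?ds ! k * 10 ^ (length ?ds - 1 - k))"
    by (rule sum.cong) (simp_all add: permute_list_nth perm)
  then show ?thesis
    using assms sum_nth_power10_eq_from_digits10[of "permute_list \<sigma> ?ds"]
    unfolding absolute_prime_def Let_def by auto
qed

lemma permute_list_transpose:
  assumes "i < length xs" and "j < length xs"
  shows "permute_list (Transposition.transpose i j) xs = xs[i := xs ! j, j := xs ! i]"
  using assms
  by (intro nth_equalityI) (auto simp: permute_list_nth permutes_swap_id nth_list_update)

lemma from_digits10_list_update:
  assumes "i < length ds"
  shows "int (from_digits10 (ds[i := d]))
       = int (from_digits10 ds) + (int d - int (ds ! i)) * 10 ^ (length ds - 1 - i)"
proof -
  let ?xs = "take i ds" and ?ys = "drop (Suc i) ds"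
  have split: "from_digits10 (?xs @ e # ?ys)
      = from_digits10 ?xs * 10 ^ Suc (length ?ys) + e * 10 ^ length ?ys + from_digits10 ?ys" for e
    by (simp add: from_digits10_append from_digits10_Cons)
  have "ds = ?xs @ ds ! i # ?ys" and "ds[i := d] = ?xs @ d # ?ys"
    using assms by (simp_all add: id_take_nth_drop upd_conv_take_nth_drop)
  then show ?thesis
    using split[of d] split[of "ds ! i"] by (simp add: algebra_simps)
qed

lemma replicate_6: "replicate 6 a = [a, a, a, a, a, a]"
  by (simp add: numeral_eq_Suc)

lemma from_digits10_replicate_6: "from_digits10 (replicate 6 a) = 111111 * a"
  by (simp add: replicate_6 from_digits10_def)

definition tail_variant :: "nat \<Rightarrow> nat \<Rightarrow> nat \<Rightarrow> nat \<Rightarrow> int" where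
  "tail_variant K a b j = int K * 10 ^ 6 + 111111 * int a + (int b - int a) * 10 ^ j"
  \<comment> \<open>K followed by the six digits a, except for a b in the position of weight 10^j\<close>

lemma absolute_prime_tail_variant:
  fixes a b K :: nat
  assumes "a < 10" and "b < 10" and "K \<ge> 1"
    and prime_N: "absolute_prime (K * 10 ^ 6 + (a * 111110 + b))" and "j < 6"
  shows "prime (tail_variant K a b j)"
proof -
  define tail where "tail = (replicate 6 a)[5 := b]"
  define ds where "ds = digits10 K @ tail"
  let ?m = "length (digits10 K)"
  have "from_digits10 tail = a * 111110 + b"
    by (simp add: tail_def from_digits10_def replicate_6)
  moreover have "\<forall>d \<in> set tail. d < 10"
    using assms(1,2) set_update_subset_insert[of "replicate 6 a" 5 b] by (auto simp: tail_def)
  moreover have "length tail = 6" by (simp add: tail_def)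
  ultimately have digits_N: "digits10 (K * 10 ^ 6 + (a * 111110 + b)) = ds"
    using digits10_append[OF assms(3), of tail] by (simp add: ds_def)
  have swap: "permute_list (Transposition.transpose (?m + (5 - j)) (?m + 5)) ds
      = digits10 K @ (replicate 6 a)[5 - j := b]"
  proof -
    have "tail[5 - j := b, 5 := tail ! (5 - j)] = (replicate 6 a)[5 - j := b]"
      by (rule nth_equalityI) (auto simp: tail_def nth_list_update)
    then show ?thesis
      using \<open>j < 6\<close>
      by (simp add: permute_list_transpose ds_def nth_append list_update_append tail_def) linarith
  qed
  have "prime (from_digits10 (digits10 K @ (replicate 6 a)[5 - j := b]))"
  proof -
    have "Transposition.transpose (?m + (5 - j)) (?m + 5) permutes {..<length ds}"
      by (intro permutes_swap_id) (simp_all add: ds_def tail_def)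
    from absolute_prime_permute_list[OF prime_N, unfolded digits_N, OF this]
    show ?thesis unfolding swap .
  qed
  moreover have "int (from_digits10 (digits10 K @ (replicate 6 a)[5 - j := b]))
      = tail_variant K a b j"
  proof -
    have "int (from_digits10 ((replicate 6 a)[5 - j := b]))
        = 111111 * int a + (int b - int a) * 10 ^ j"
      using \<open>j < 6\<close> from_digits10_list_update[of "5 - j" "replicate 6 a" b]
      by (simp add: from_digits10_replicate_6)
    then show ?thesis by (simp add: from_digits10_append tail_variant_def)
  qed
  ultimately show ?thesis by (metis prime_nat_int_transfer)
qed

lemma tail_variant_gt_7:
  assumes "K \<ge> 1" and "j < 6"
  shows "tail_variant K a b j > 7"
proof -
  have "(10::int) ^ j \<le> 10 ^ 5"
    using \<open>j < 6\<close> by (intro power_increasing) simp_all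
  then have "int a * 10 ^ j \<le> int a * 111111"
    by (intro mult_left_mono) simp_all
  moreover have "tail_variant K a b j
      = int K * 10 ^ 6 + (int a * 111111 - int a * 10 ^ j) + int b * 10 ^ j"
    by (simp add: tail_variant_def algebra_simps)
  moreover have "int b * 10 ^ j \<ge> 0" by simp
  moreover have "int K * 10 ^ 6 > 7"
    using assms(1) by simp
  ultimately show ?thesis by linarith
qed

lemma ten_power_hits_residue_mod_7:
  fixes c d :: int
  assumes "\<not> 7 dvd c" and "\<not> 7 dvd d"
  shows "\<exists>j<6. 7 dvd (c + d * 10 ^ j)"
proof -
  have reduce: "7 dvd (c + d * 10 ^ j) \<longleftrightarrow> 7 dvd (c mod 7 + (d mod 7) * 10 ^ j)" for j :: nat
  proof -
    have "(d mod 7 * 10 ^ j) mod 7 = (d * 10 ^ j) mod 7"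
      by (rule mod_mult_left_eq)
    then have "(c mod 7 + d mod 7 * 10 ^ j) mod 7 = (c + d * 10 ^ j) mod 7"
      by (metis mod_add_cong mod_mod_trivial)
    then show ?thesis by (simp only: dvd_eq_mod_eq_0)
  qed
  have "c mod 7 \<in> {1..6}" and "d mod 7 \<in> {1..6}"
    using assms by (auto simp: dvd_eq_mod_eq_0 intro: order.antisym)
  then have "c mod 7 \<in> {1, 2, 3, 4, 5, 6}" and "d mod 7 \<in> {1, 2, 3, 4, 5, 6}"
    by auto
  then have "\<exists>j<6. 7 dvd (c mod 7 + (d mod 7) * 10 ^ j)"
    by (simp add: Ex_less_Suc2 numeral_eq_Suc) (elim disjE; simp)
  then show ?thesis by (simp only: reduce)
qed

lemma tail_variant_dvd_2_or_7:
  fixes a b K :: nat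
  assumes "a < 10" and "b < 10" and "a \<noteq> b" and "\<not> 7 dvd K"
  shows "\<exists>j<6. 2 dvd tail_variant K a b j \<or> 7 dvd tail_variant K a b j"
proof (cases "7 dvd (int b - int a)")
  case True
  with assms(1-3) have "odd (a + b)" by presburger
  then consider "even b" | "even a" by (metis even_add)
  then show ?thesis
  proof cases
    case 1
    have "tail_variant K a b 0 = 2 * (500000 * int K + 55555 * int a) + int b"
      by (simp add: tail_variant_def)
    with 1 have "2 dvd tail_variant K a b 0" by simp
    then show ?thesis by (metis zero_less_numeral)
  next
    case 2
    have "tail_variant K a b 1 = 2 * (500000 * int K + 55550 * int a + 5 * int b) + int a"
      by (simp add: tail_variant_def)
    with 2 have "2 dvd tail_variant K a b 1" by simp
    moreover have "(1::nat) < 6" by simp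
    ultimately show ?thesis by metis
  qed
next
  case False
  have eq: "int K * 10 ^ 6 + 111111 * int a = int K + (142857 * int K + 15873 * int a) * 7"
    by simp
  have "\<not> 7 dvd (int K * 10 ^ 6 + 111111 * int a)"
    unfolding eq dvd_add_times_triv_right_iff using assms(4) by presburger
  with False show ?thesis
    using ten_power_hits_residue_mod_7 unfolding tail_variant_def by blast
qed

lemma ex_tail_variant_not_prime:
  fixes a b K :: nat
  assumes "a < 10" and "b < 10" and "a \<noteq> b" and "K \<ge> 1" and "\<not> 7 dvd K"
  shows "\<exists>j<6. \<not> prime (tail_variant K a b j)"
proof -
  obtain j where "j < 6" and "2 dvd tail_variant K a b j \<or> 7 dvd tail_variant K a b j"
    using tail_variant_dvd_2_or_7 assms(1-3,5) by blast
  moreover have "tail_variant K a b j > 7"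
    using tail_variant_gt_7 assms(4) \<open>j < 6\<close> by blast
  ultimately show ?thesis
    using primes_dvd_imp_eq[of 2 "tail_variant K a b j"] primes_dvd_imp_eq[of 7 "tail_variant K a b j"]
    by force
qed

theorem lemma4:
  fixes a b K N :: nat
  assumes "a < 10" and "b < 10" and "a \<noteq> b" and "K \<ge> 1"
    and "N = K * 10 ^ 6 + (a * 111110 + b)"
    and "absolute_prime N"
  shows "7 dvd K"
proof (rule ccontr)
  assume "\<not> 7 dvd K"
  then obtain j where "j < 6" and "\<not> prime (tail_variant K a b j)"
    using ex_tail_variant_not_prime assms(1-4) by blast
  moreover have "prime (tail_variant K a b j)"
    using absolute_prime_tail_variant[OF assms(1,2,4) _ \<open>j < 6\<close>] assms(5,6) by simp
  ultimately show False by blast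
qed

end
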